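(* Assume that for all $i,j\in I$ the map $u\mapsto\lambda_{ij}(u)$ is continuous on $U$. Then for every bounded continuous function $w\colon\Delta_e\to\mathbb R$, the function $\rho\mapsto r(\rho,u)\int_{\Delta_e}w(p)\,R(\rho,u;dp)$ is continuous on $\Delta_e$ uniformly in $u\in U$; that is, for every $\rho\in\Delta_e$ and $\varepsilon>0$ there is $\delta>0$ such that $\sup_{u\in U}\bigl|r(\rho',u)\int_{\Delta_e}w\,dR(\rho',u;\cdot)-r(\rho,u)\int_{\Delta_e}w\,dR(\rho,u;\cdot)\bigr|<\varepsilon$ for all $\rho'\in\Delta_e$ with $|\rho'-\rho|<\delta$.
   Context: $I$, $O$ are finite sets and $h\colon I\to O$ is surjective and non-constant. $U$ is a compact metric space. For each $u\in U$, $\Lambda(u)=(\lambda_{ij}(u))_{i,j\in I}$ is a real matrix with $\lambda_{ij}(u)\ge0$ for $i\ne j$ and $\sum_j\lambda_{ij}(u)=0$. Measures on $I$ are row vectors in $\mathbb R^{|I|}$; for $a\in O$, $\Delta_a$ is the set of probability measures on $I$ supported in $h^{-1}(a)$, $\Delta_e=\bigcup_{a\in O}\Delta_a$ with the topology of $\mathbb R^{|I|}$, and $\mathbb 1_{h^{-1}(a)}$ is the column indicator vector of $h^{-1}(a)$. For $b\in O$ and a row vector $\mu$, $H_b[\mu]$ is the row vector with $H_b[\mu](i)=0$ for $i\notin h^{-1}(b)$, $H_b[\mu](i)=\mu(i)/(\mu\mathbb 1_{h^{-1}(b)})$ for $i\in h^{-1}(b)$ when $\mu\mathbb 1_{h^{-1}(b)}\ne0$,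 and $H_b[\mu]=\nu_b$ (a fixed arbitrary element of $\Delta_b$) when $\mu\mathbb 1_{h^{-1}(b)}=0$. For $\rho\in\Delta_a$ and $u\in U$: $r(\rho,u)=-\rho\Lambda(u)\mathbb 1_{h^{-1}(a)}$ and $R(\rho,u;D)=\sum_{b\in O}\mathbb 1_D(H_b[\rho\Lambda(u)])\,q(\rho,u,b)$ for Borel $D\subseteq\Delta_e$, where $q(\rho,u,b)=\frac{\rho\Lambda(u)\mathbb 1_{h^{-1}(b)}}{-\rho\Lambda(u)\mathbb 1_{h^{-1}(a)}}\mathbb 1_{b\ne a}$ if $\rho\Lambda(u)\mathbb 1_{h^{-1}(a)}\ne0$ and $q(\rho,u,b)=q_a(b)$ otherwise, with $q_a$ a fixed arbitrary probability on $O\setminus\{a\}$. *)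

theory Defs
  imports "HOL-Probability.Probability"
begin

text \<open>Measures on I are row vectors, modelled as elements of real^'i
 (Euclidean topology). The generator matrix at u is Lambda u with
 (Lambda u $ i $ j) = lambda_ij(u). Row vector times matrix is v*.\<close>

definition ind :: "('i::finite \<Rightarrow> 'o) \<Rightarrow> 'o \<Rightarrow> real^'i" where
  "ind h a = (\<chi> i. if h i = a then 1 else 0)"

definition Delta :: "('i::finite \<Rightarrow> 'o) \<Rightarrow> 'o \<Rightarrow> (real^'i) set" where
  "Delta h a = {\<rho>. (\<forall>i. 0 \<le> \<rho> $ i) \<and> (\<forall>i. h i \<noteq> a \<longrightarrow> \<rho> $ i = 0)
                     \<and> (\<Sum>i\<in>UNIV. \<rho> $ i) = 1}"

definition Delta_e :: "('i::finite \<Rightarrow> 'o) \<Rightarrow> (real^'i) set" where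
  "Delta_e h = (\<Union>a. Delta h a)"

definition cls :: "('i::finite \<Rightarrow> 'o) \<Rightarrow> real^'i \<Rightarrow> 'o" where
  "cls h \<rho> = (THE a. \<rho> \<in> Delta h a)"

definition Hop :: "('i::finite \<Rightarrow> 'o) \<Rightarrow> ('o \<Rightarrow> real^'i) \<Rightarrow> 'o \<Rightarrow> real^'i \<Rightarrow> real^'i" where
  "Hop h \<nu> b \<mu> = (if \<mu> \<bullet> ind h b \<noteq> 0
      then (\<chi> i. if h i = b then \<mu> $ i / (\<mu> \<bullet> ind h b) else 0)
      else \<nu> b)"

definition rate :: "('i::finite \<Rightarrow> 'o) \<Rightarrow> ('u \<Rightarrow> real^'i^'i) \<Rightarrow> real^'i \<Rightarrow> 'u \<Rightarrow> real" where
  "rate h \<Lambda> \<rho> u = - ((\<rho> v* \<Lambda> u) \<bullet> ind h (cls h \<rho>))"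

definition qjump :: "('i::finite \<Rightarrow> 'o) \<Rightarrow> ('u \<Rightarrow> real^'i^'i) \<Rightarrow> ('o \<Rightarrow> 'o \<Rightarrow> real)
      \<Rightarrow> real^'i \<Rightarrow> 'u \<Rightarrow> 'o \<Rightarrow> real" where
  "qjump h \<Lambda> qa \<rho> u b =
     (let a = cls h \<rho>; s = (\<rho> v* \<Lambda> u) \<bullet> ind h a in
      if s \<noteq> 0 then (if b \<noteq> a then ((\<rho> v* \<Lambda> u) \<bullet> ind h b) / (- s) else 0)
      else qa a b)"

definition Rker :: "('i::finite \<Rightarrow> 'o::finite) \<Rightarrow> ('u \<Rightarrow> real^'i^'i) \<Rightarrow> ('o \<Rightarrow> real^'i)
      \<Rightarrow> ('o \<Rightarrow> 'o \<Rightarrow> real) \<Rightarrow> real^'i \<Rightarrow> 'u \<Rightarrow> (real^'i) measure" where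
  "Rker h \<Lambda> \<nu> qa \<rho> u = measure_of (Delta_e h) (sets (restrict_space borel (Delta_e h)))
     (\<lambda>D. \<Sum>b\<in>UNIV. indicator D (Hop h \<nu> b (\<rho> v* \<Lambda> u)) * ennreal (qjump h \<Lambda> qa \<rho> u b))"

end

theory Submission
  imports Defs
begin

text \<open>Distinct classes \<open>\<Delta>\<^sub>a\<close> are at distance at least \<open>1/|I|\<close>, so every \<open>\<rho>'\<close> close to
  \<open>\<rho> \<in> \<Delta>\<^sub>a\<close> lies in \<open>\<Delta>\<^sub>a\<close> as well. On \<open>\<Delta>\<^sub>a\<close> the rate cancels the normalisation of the
  jump probabilities, so that with \<open>\<mu> = \<rho>\<Lambda>(u)\<close> we get
  \<open>r(\<rho>,u) \<integral> w dR(\<rho>,u;\<cdot>) = \<Sum>\<^sub>b\<^sub>\<noteq>\<^sub>a (\<mu> \<one>\<^sub>b) w(H\<^sub>b[\<mu>])\<close>. Each summand is continuous in \<open>\<mu>\<close>: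
  where the weight \<open>\<mu> \<one>\<^sub>b\<close> vanishes, boundedness of \<open>w\<close> suffices, and elsewhere \<open>H\<^sub>b\<close> is
  continuous. Composed with the continuous map \<open>(\<rho>,u) \<mapsto> \<rho>\<Lambda>(u)\<close>, this is uniformly
  continuous on the compact set \<open>\<Delta>\<^sub>a \<times> U\<close>, which gives the uniformity in \<open>u\<close>.\<close>

lemma integral_measure_of_point_masses:
  fixes x :: "'o::finite \<Rightarrow> 'a::topological_space" and c :: "'o \<Rightarrow> real"
    and w :: "'a \<Rightarrow> real"
  assumes x_in: "\<And>b. c b \<noteq> 0 \<Longrightarrow> x b \<in> \<Omega>" and c_nonneg: "\<And>b. 0 \<le> c b"
    and "y \<in> \<Omega>" and w: "continuous_on \<Omega> w"
  shows "integral\<^sup>L (measure_of \<Omega> (sets (restrict_space borel \<Omega>))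
      (\<lambda>D. \<Sum>b\<in>UNIV. indicator D (x b) * ennreal (c b))) w = (\<Sum>b\<in>UNIV. c b * w (x b))"
proof -
  \<comment> \<open>Points of weight zero may lie outside \<open>\<Omega>\<close>; move them to \<open>y\<close> to get a measurable map.\<close>
  define x' where "x' b = (if x b \<in> \<Omega> then x b else y)" for b
  have x'_eq: "c b * f (x' b) = c b * f (x b)"
    "indicator D (x' b) * ennreal (c b) = indicator D (x b) * ennreal (c b)" for b f D
    using x_in[of b] by (cases "c b = 0"; auto simp: x'_def)+
  let ?P = "point_measure UNIV (\<lambda>b. ennreal (c b))"
  define N where "N = distr ?P (restrict_space borel \<Omega>) x'"
  have x'_meas: "x' \<in> measurable ?P (restrict_space borel \<Omega>)"
    using \<open>y \<in> \<Omega>\<close> by (simp add: x'_def space_restrict_space)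
  have "measure_of \<Omega> (sets (restrict_space borel \<Omega>))
      (\<lambda>D. \<Sum>b\<in>UNIV. indicator D (x b) * ennreal (c b))
     = measure_of \<Omega> (sets (restrict_space borel \<Omega>)) (emeasure N)"
  proof (rule measure_of_eq)
    show "sets (restrict_space borel \<Omega>) \<subseteq> Pow \<Omega>"
      using sets.space_closed[of "restrict_space borel \<Omega>"] by (simp add: space_restrict_space)
    fix D assume "D \<in> sigma_sets \<Omega> (sets (restrict_space borel \<Omega>))"
    then have D: "D \<in> sets (restrict_space borel \<Omega>)"
      using sets.sigma_sets_eq[of "restrict_space borel \<Omega>"] by (simp add: space_restrict_space)
    have "emeasure N D = (\<Sum>b\<in>x' -` D. ennreal (c b))"
      using D x'_meas by (simp add: N_def emeasure_distr space_point_measure emeasure_point_measure_finite)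
    also have "\<dots> = (\<Sum>b\<in>UNIV. indicator D (x' b) * ennreal (c b))"
      by (simp add: sum.If_cases indicator_def vimage_def Collect_conv_if)
    also have "\<dots> = (\<Sum>b\<in>UNIV. indicator D (x b) * ennreal (c b))"
      by (simp add: x'_eq)
    finally show "(\<Sum>b\<in>UNIV. indicator D (x b) * ennreal (c b)) = emeasure N D" by simp
  qed
  also have "\<dots> = N"
    using measure_of_of_measure[of N] by (simp add: N_def space_restrict_space)
  finally have "integral\<^sup>L (measure_of \<Omega> (sets (restrict_space borel \<Omega>))
      (\<lambda>D. \<Sum>b\<in>UNIV. indicator D (x b) * ennreal (c b))) w = integral\<^sup>L ?P (\<lambda>b. w (x' b))"
    using integral_distr[OF x'_meas borel_measurable_continuous_on_restrict[OF w]]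
    by (simp add: N_def)
  also have "\<dots> = (\<Sum>b\<in>UNIV. c b * w (x b))"
    using c_nonneg by (simp add: lebesgue_integral_point_measure_finite x'_eq)
  finally show ?thesis .
qed

lemma Delta_disjoint: "\<rho> \<in> Delta h a \<Longrightarrow> \<rho> \<in> Delta h b \<Longrightarrow> a = b"
proof (rule ccontr)
  assume "\<rho> \<in> Delta h a" "\<rho> \<in> Delta h b" "a \<noteq> b"
  then have "\<rho> = 0" by (auto simp: Delta_def vec_eq_iff)
  with \<open>\<rho> \<in> Delta h a\<close> show False by (simp add: Delta_def)
qed

lemma cls_eq: "\<rho> \<in> Delta h a \<Longrightarrow> cls h \<rho> = a"
  unfolding cls_def by (rule the_equality) (auto dest: Delta_disjoint)

lemma compact_Delta: "compact (Delta h a :: (real^'i::finite) set)"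
proof (subst compact_eq_bounded_closed, rule conjI)
  have "norm \<rho> \<le> 1" if "\<rho> \<in> Delta h a" for \<rho> :: "real^'i"
    using norm_le_l1_cart[of \<rho>] that by (simp add: Delta_def)
  then show "bounded (Delta h a :: (real^'i) set)"
    by (auto simp: bounded_iff)
  have "Delta h a = (\<Inter>i. {\<rho>::real^'i. 0 \<le> \<rho> $ i}) \<inter> (\<Inter>i\<in>{i. h i \<noteq> a}. {\<rho>. \<rho> $ i = 0})
      \<inter> {\<rho>. (\<Sum>i\<in>UNIV. \<rho> $ i) = 1}"
    by (auto simp: Delta_def)
  then show "closed (Delta h a :: (real^'i) set)"
    by (simp only:) (intro closed_Int closed_INT closed_Collect_le closed_Collect_eq
        continuous_intros ballI)
qed

lemma mem_Delta_if_dist_less: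
  fixes \<rho> \<rho>' :: "real^'i::finite"
  assumes \<rho>: "\<rho> \<in> Delta h a" and "\<rho>' \<in> Delta_e h" and close: "dist \<rho>' \<rho> < 1 / real CARD('i)"
  shows "\<rho>' \<in> Delta h a"
proof -
  obtain b where \<rho>': "\<rho>' \<in> Delta h b"
    using \<open>\<rho>' \<in> Delta_e h\<close> by (auto simp: Delta_e_def)
  have "a = b"
  proof (rule ccontr)
    assume "a \<noteq> b"
    \<comment> \<open>Then all the mass of \<open>\<rho>\<close> sits where \<open>\<rho>'\<close> vanishes.\<close>
    have "1 = (\<Sum>i\<in>UNIV. \<rho> $ i)"
      using \<rho> by (simp add: Delta_def)
    also have "\<dots> = (\<Sum>i\<in>UNIV. if h i = a then (\<rho> - \<rho>') $ i else 0)"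
      by (rule sum.cong[OF refl]) (use \<rho> \<rho>' \<open>a \<noteq> b\<close> in \<open>auto simp: Delta_def\<close>)
    also have "\<dots> \<le> (\<Sum>i\<in>(UNIV::'i set). dist \<rho>' \<rho>)"
      using component_le_norm_cart[of "\<rho> - \<rho>'"]
      by (intro sum_mono) (auto simp: dist_norm norm_minus_commute abs_le_iff)
    finally show False
      using close by (simp add: field_simps)
  qed
  with \<rho>' show ?thesis by simp
qed

lemma inner_ind: "(\<mu>::real^'i::finite) \<bullet> ind h b = (\<Sum>i | h i = b. \<mu> $ i)"
  by (simp add: inner_vec_def ind_def if_distrib sum.If_cases cong: if_cong)

lemma sum_inner_ind:
  "(\<Sum>b\<in>(UNIV::'o::finite set). (\<mu>::real^'i::finite) \<bullet> ind h b) = (\<Sum>i\<in>UNIV. \<mu> $ i)"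
  unfolding inner_ind using sum.group[of UNIV UNIV h "\<lambda>i. \<mu> $ i"] by simp

definition jump_vectors :: "('i::finite \<Rightarrow> 'o) \<Rightarrow> 'o \<Rightarrow> (real^'i) set" where
  "jump_vectors h a = {\<mu>. (\<forall>i. h i \<noteq> a \<longrightarrow> 0 \<le> \<mu> $ i) \<and> (\<Sum>i\<in>UNIV. \<mu> $ i) = 0}"

lemma vector_matrix_mult_in_jump_vectors:
  fixes L :: "real^'i::finite^'i"
  assumes "\<rho> \<in> Delta h a" and "\<forall>i j. i \<noteq> j \<longrightarrow> 0 \<le> L $ i $ j"
    and "\<forall>i. (\<Sum>j\<in>UNIV. L $ i $ j) = 0"
  shows "\<rho> v* L \<in> jump_vectors h a"
proof -
  have nonneg: "0 \<le> (\<rho> v* L) $ i" if "h i \<noteq> a" for i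
  proof -
    have "0 \<le> \<rho> $ j * L $ j $ i" for j
    proof (cases "h j = a")
      case True
      then have "j \<noteq> i" using that by auto
      then show ?thesis using assms(1,2) by (simp add: Delta_def)
    qed (use assms(1) in \<open>simp add: Delta_def\<close>)
    then show ?thesis by (simp add: vector_matrix_mult_def sum_nonneg)
  qed
  have "(\<Sum>i\<in>UNIV. (\<rho> v* L) $ i) = (\<Sum>i\<in>UNIV. \<Sum>j\<in>UNIV. \<rho> $ j * L $ j $ i)"
    by (simp add: vector_matrix_mult_def)
  also have "\<dots> = (\<Sum>j\<in>UNIV. \<rho> $ j * (\<Sum>i\<in>UNIV. L $ j $ i))"
    by (subst sum.swap) (simp add: sum_distrib_left)
  finally show ?thesis
    using nonneg assms(3) by (simp add: jump_vectors_def)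
qed

lemma inner_ind_nonneg:
  "(\<And>i. h i = b \<Longrightarrow> 0 \<le> (\<mu>::real^'i::finite) $ i) \<Longrightarrow> 0 \<le> \<mu> \<bullet> ind h b"
  unfolding inner_ind by (intro sum_nonneg) auto

lemma jump_vectors_inner_ind_nonneg:
  "\<mu> \<in> jump_vectors h a \<Longrightarrow> b \<noteq> a \<Longrightarrow> 0 \<le> \<mu> \<bullet> ind h b"
  by (rule inner_ind_nonneg) (auto simp: jump_vectors_def)

lemma jump_vectors_outflow:
  fixes h :: "'i::finite \<Rightarrow> 'o::finite"
  assumes "\<mu> \<in> jump_vectors h a"
  shows "- (\<mu> \<bullet> ind h a) = (\<Sum>b\<in>UNIV - {a}. \<mu> \<bullet> ind h b)"
proof -
  have "(\<Sum>b\<in>UNIV. \<mu> \<bullet> ind h b) = 0"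
    using assms sum_inner_ind[where h = h and \<mu> = \<mu>] by (simp add: jump_vectors_def)
  then show ?thesis
    by (simp add: sum.remove[of UNIV a])
qed

lemma Hop_in_Delta:
  assumes "\<And>i. h i = b \<Longrightarrow> 0 \<le> \<mu> $ i" and "\<nu> b \<in> Delta h b"
  shows "Hop h \<nu> b \<mu> \<in> Delta h b"
proof (cases "\<mu> \<bullet> ind h b = 0")
  case False
  then have "0 < \<mu> \<bullet> ind h b"
    using inner_ind_nonneg[of h b \<mu>, OF assms(1)] by linarith
  moreover have "(\<Sum>i\<in>UNIV. if h i = b then \<mu> $ i / (\<mu> \<bullet> ind h b) else 0) = 1"
    using False by (simp add: sum.If_cases inner_ind flip: sum_divide_distrib)
  ultimately show ?thesis
    using assms(1) by (simp add: Delta_def Hop_def)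
qed (use assms in \<open>simp add: Hop_def\<close>)

text \<open>\<open>r(\<rho>,u) \<integral> w dR(\<rho>,u;\<cdot>)\<close> for \<open>\<rho> \<in> \<Delta>\<^sub>a\<close>, as a function of \<open>\<mu> = \<rho>\<Lambda>(u)\<close>.\<close>
definition jump_sum :: "('i::finite \<Rightarrow> 'o::finite) \<Rightarrow> ('o \<Rightarrow> real^'i) \<Rightarrow> (real^'i \<Rightarrow> real)
    \<Rightarrow> 'o \<Rightarrow> real^'i \<Rightarrow> real" where
  "jump_sum h \<nu> w a \<mu> = (\<Sum>b\<in>UNIV - {a}. (\<mu> \<bullet> ind h b) * w (Hop h \<nu> b \<mu>))"

lemma rate_eq_outflow:
  fixes h :: "'i::finite \<Rightarrow> 'o::finite"
  assumes "\<rho> \<in> Delta h a" and "\<rho> v* \<Lambda> u \<in> jump_vectors h a"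
  shows "rate h \<Lambda> \<rho> u = (\<Sum>b\<in>UNIV - {a}. (\<rho> v* \<Lambda> u) \<bullet> ind h b)"
  using assms by (simp add: rate_def cls_eq jump_vectors_outflow)

lemma qjump_eq:
  fixes h :: "'i::finite \<Rightarrow> 'o::finite"
  assumes "\<rho> \<in> Delta h a" and "\<rho> v* \<Lambda> u \<in> jump_vectors h a"
  shows "qjump h \<Lambda> qa \<rho> u b = (if rate h \<Lambda> \<rho> u \<noteq> 0
    then (if b \<noteq> a then ((\<rho> v* \<Lambda> u) \<bullet> ind h b) / rate h \<Lambda> \<rho> u else 0) else qa a b)"
  using assms by (simp add: qjump_def rate_def cls_eq Let_def)

lemma integral_Rker:
  fixes h :: "'i::finite \<Rightarrow> 'o::finite"
  assumes \<rho>: "\<rho> \<in> Delta h a" and \<mu>: "\<rho> v* \<Lambda> u \<in> jump_vectors h a"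
    and \<nu>: "\<forall>b. \<nu> b \<in> Delta h b" and qa: "\<forall>b. 0 \<le> qa a b" "qa a a = 0"
    and w: "continuous_on (Delta_e h) w"
  shows "integral\<^sup>L (Rker h \<Lambda> \<nu> qa \<rho> u) w
    = (\<Sum>b\<in>UNIV. qjump h \<Lambda> qa \<rho> u b * w (Hop h \<nu> b (\<rho> v* \<Lambda> u)))"
  unfolding Rker_def
proof (rule integral_measure_of_point_masses)
  have rate_nonneg: "0 \<le> rate h \<Lambda> \<rho> u"
    unfolding rate_eq_outflow[where \<Lambda> = \<Lambda> and u = u, OF \<rho> \<mu>]
    by (auto intro: sum_nonneg jump_vectors_inner_ind_nonneg[OF \<mu>])
  show "0 \<le> qjump h \<Lambda> qa \<rho> u b" for b
    using rate_nonneg qa jump_vectors_inner_ind_nonneg[OF \<mu>, of b]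
    by (simp add: qjump_eq[where \<Lambda> = \<Lambda> and u = u, OF \<rho> \<mu>])
  fix b assume "qjump h \<Lambda> qa \<rho> u b \<noteq> 0"
  then have "b \<noteq> a"
    using qa by (auto split: if_splits simp: qjump_eq[where \<Lambda> = \<Lambda> and u = u, OF \<rho> \<mu>])
  then have "Hop h \<nu> b (\<rho> v* \<Lambda> u) \<in> Delta h b"
    using \<mu> \<nu> by (intro Hop_in_Delta) (auto simp: jump_vectors_def)
  then show "Hop h \<nu> b (\<rho> v* \<Lambda> u) \<in> Delta_e h"
    by (auto simp: Delta_e_def)
qed (use \<nu> w in \<open>auto simp: Delta_e_def\<close>)

lemma rate_mult_integral_Rker:
  fixes h :: "'i::finite \<Rightarrow> 'o::finite"
  assumes \<rho>: "\<rho> \<in> Delta h a" and \<mu>: "\<rho> v* \<Lambda> u \<in> jump_vectors h a"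
    and \<nu>: "\<forall>b. \<nu> b \<in> Delta h b" and qa: "\<forall>b. 0 \<le> qa a b" "qa a a = 0"
    and w: "continuous_on (Delta_e h) w"
  shows "rate h \<Lambda> \<rho> u * integral\<^sup>L (Rker h \<Lambda> \<nu> qa \<rho> u) w = jump_sum h \<nu> w a (\<rho> v* \<Lambda> u)"
proof (cases "rate h \<Lambda> \<rho> u = 0")
  case True
  then have "(\<rho> v* \<Lambda> u) \<bullet> ind h b = 0" if "b \<noteq> a" for b
    using that jump_vectors_inner_ind_nonneg[OF \<mu>] rate_eq_outflow[where \<Lambda> = \<Lambda> and u = u, OF \<rho> \<mu>]
      sum_nonneg_eq_0_iff[of "UNIV - {a}" "\<lambda>b. (\<rho> v* \<Lambda> u) \<bullet> ind h b"]
    by auto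
  with True show ?thesis
    by (simp add: jump_sum_def)
next
  case False
  have "rate h \<Lambda> \<rho> u * integral\<^sup>L (Rker h \<Lambda> \<nu> qa \<rho> u) w = (\<Sum>b\<in>UNIV.
      if b = a then 0 else (\<rho> v* \<Lambda> u) \<bullet> ind h b * w (Hop h \<nu> b (\<rho> v* \<Lambda> u)))"
    using False
    by (simp add: integral_Rker[where \<Lambda> = \<Lambda> and u = u and qa = qa and a = a, OF assms]
        qjump_eq[where \<Lambda> = \<Lambda> and u = u, OF \<rho> \<mu>] sum_distrib_left)
      (rule sum.cong, auto)
  also have "\<dots> = jump_sum h \<nu> w a (\<rho> v* \<Lambda> u)"
    by (simp add: jump_sum_def sum.If_cases Compl_eq_Diff_UNIV)
  finally show ?thesis .
qed

lemma continuous_on_mult_bounded_factor: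
  fixes f g :: "'a::t2_space \<Rightarrow> real"
  assumes f: "continuous_on K f" and g_bdd: "\<And>x. x \<in> K \<Longrightarrow> \<bar>g x\<bar> \<le> B"
    and g: "\<And>x. x \<in> K \<Longrightarrow> f x \<noteq> 0 \<Longrightarrow> continuous (at x within K) g"
  shows "continuous_on K (\<lambda>x. f x * g x)"
  unfolding continuous_on_eq_continuous_within
proof
  fix x assume x: "x \<in> K"
  have f_x: "continuous (at x within K) f"
    using f x by (simp add: continuous_on_eq_continuous_within)
  show "continuous (at x within K) (\<lambda>x. f x * g x)"
  proof (cases "f x = 0")
    case True
    have "((\<lambda>y. f y * g y) \<longlongrightarrow> 0) (at x within K)"
    proof (rule Lim_null_comparison)
      have "\<forall>\<^sub>F y in at x within K. y \<in> K"
        by (simp add: eventually_at_filter)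
      then show "\<forall>\<^sub>F y in at x within K. norm (f y * g y) \<le> B * \<bar>f y\<bar>"
        by eventually_elim (simp add: g_bdd abs_mult mult.commute[of B] mult_left_mono)
      have "((\<lambda>y. B * \<bar>f y\<bar>) \<longlongrightarrow> B * \<bar>f x\<bar>) (at x within K)"
        using f_x by (intro tendsto_intros) (simp add: continuous_within)
      with True show "((\<lambda>y. B * \<bar>f y\<bar>) \<longlongrightarrow> 0) (at x within K)"
        by simp
    qed
    with True show ?thesis by (simp add: continuous_within)
  qed (use f_x g x in \<open>auto intro: continuous_mult\<close>)
qed

lemma continuous_on_Hop: "continuous_on {\<mu>. \<mu> \<bullet> ind h b \<noteq> 0} (Hop h \<nu> b)"
proof (rule continuous_on_eq)
  show "continuous_on {\<mu>. \<mu> \<bullet> ind h b \<noteq> 0}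
      (\<lambda>\<mu>. \<chi> i. if h i = b then \<mu> $ i / (\<mu> \<bullet> ind h b) else 0)"
  proof (intro continuous_on_vec_lambda)
    fix i show "continuous_on {\<mu>. \<mu> \<bullet> ind h b \<noteq> 0}
        (\<lambda>\<mu>. if h i = b then \<mu> $ i / (\<mu> \<bullet> ind h b) else 0)"
      by (cases "h i = b")
        (auto intro!: continuous_on_divide continuous_on_component continuous_on_inner
          continuous_on_id continuous_on_const)
  qed
qed (simp add: Hop_def)

lemma continuous_on_jump_term:
  assumes w: "continuous_on (Delta h b) w" and w_bdd: "\<And>x. x \<in> Delta h b \<Longrightarrow> \<bar>w x\<bar> \<le> B"
    and \<nu>: "\<nu> b \<in> Delta h b"
  shows "continuous_on {\<mu>. \<forall>i. h i = b \<longrightarrow> 0 \<le> \<mu> $ i} (\<lambda>\<mu>. (\<mu> \<bullet> ind h b) * w (Hop h \<nu> b \<mu>))"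
proof (rule continuous_on_mult_bounded_factor)
  let ?S = "{\<mu>. \<forall>i. h i = b \<longrightarrow> 0 \<le> \<mu> $ i}"
  have Hop_S: "Hop h \<nu> b ` ?S \<subseteq> Delta h b"
    using \<nu> by (auto intro!: Hop_in_Delta)
  then show "\<bar>w (Hop h \<nu> b \<mu>)\<bar> \<le> B" if "\<mu> \<in> ?S" for \<mu>
    using that w_bdd by blast
  fix \<mu> assume "\<mu> \<in> ?S" "\<mu> \<bullet> ind h b \<noteq> 0"
  have "open {\<mu>::real^'a. \<mu> \<bullet> ind h b \<noteq> 0}"
    by (intro open_Collect_neq continuous_on_inner continuous_on_id continuous_on_const)
  then have "isCont (Hop h \<nu> b) \<mu>"
    using continuous_on_Hop[of h b \<nu>] \<open>\<mu> \<bullet> ind h b \<noteq> 0\<close> continuous_on_eq_continuous_at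
    by blast
  moreover have "continuous (at (Hop h \<nu> b \<mu>) within Hop h \<nu> b ` ?S) w"
    using continuous_on_subset[OF w Hop_S] \<open>\<mu> \<in> ?S\<close>
    unfolding continuous_on_eq_continuous_within by blast
  ultimately show "continuous (at \<mu> within ?S) (\<lambda>\<mu>. w (Hop h \<nu> b \<mu>))"
    by (rule continuous_within_compose2[OF continuous_at_imp_continuous_at_within])
qed (intro continuous_on_inner continuous_on_id continuous_on_const)

lemma continuous_on_jump_sum:
  fixes h :: "'i::finite \<Rightarrow> 'o::finite"
  assumes w: "continuous_on (Delta_e h) w" and w_bdd: "\<And>x. x \<in> Delta_e h \<Longrightarrow> \<bar>w x\<bar> \<le> B"
    and \<nu>: "\<forall>b. \<nu> b \<in> Delta h b"
  shows "continuous_on (jump_vectors h a) (jump_sum h \<nu> w a)"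
  unfolding jump_sum_def
proof (intro continuous_on_sum)
  fix b assume "b \<in> UNIV - {a}"
  then have "jump_vectors h a \<subseteq> {\<mu>. \<forall>i. h i = b \<longrightarrow> 0 \<le> \<mu> $ i}"
    by (auto simp: jump_vectors_def)
  moreover have "Delta h b \<subseteq> Delta_e h"
    by (auto simp: Delta_e_def)
  ultimately show "continuous_on (jump_vectors h a) (\<lambda>\<mu>. \<mu> \<bullet> ind h b * w (Hop h \<nu> b \<mu>))"
    using \<nu> w_bdd
    by (blast intro: continuous_on_subset[OF continuous_on_jump_term] continuous_on_subset[OF w])
qed

lemma continuous_on_vector_matrix_mult:
  fixes \<Lambda> :: "'u::topological_space \<Rightarrow> real^'i::finite^'i"
  assumes "\<forall>i j. continuous_on U (\<lambda>u. \<Lambda> u $ i $ j)"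
  shows "continuous_on (K \<times> U) (\<lambda>(x, u). x v* \<Lambda> u)"
proof -
  have entries: "continuous_on (K \<times> U) (\<lambda>p. \<Lambda> (snd p) $ i $ j)" for i j
    by (rule continuous_on_compose2[OF assms[rule_format] continuous_on_snd]) auto
  show ?thesis
    unfolding vector_matrix_mult_def case_prod_beta
    by (intro continuous_on_vec_lambda continuous_on_sum continuous_on_mult entries
        continuous_on_component continuous_on_fst continuous_on_id)
qed

lemma continuous_on_jump_sum_generator:
  fixes h :: "'i::finite \<Rightarrow> 'o::finite" and \<Lambda> :: "'u::topological_space \<Rightarrow> real^'i^'i"
  assumes offdiag: "\<forall>u\<in>U. \<forall>i j. i \<noteq> j \<longrightarrow> 0 \<le> \<Lambda> u $ i $ j"
    and rowsum: "\<forall>u\<in>U. \<forall>i. (\<Sum>j\<in>UNIV. \<Lambda> u $ i $ j) = 0"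
    and \<Lambda>: "\<forall>i j. continuous_on U (\<lambda>u. \<Lambda> u $ i $ j)"
    and w: "continuous_on (Delta_e h) w" and w_bdd: "\<And>x. x \<in> Delta_e h \<Longrightarrow> \<bar>w x\<bar> \<le> B"
    and \<nu>: "\<forall>b. \<nu> b \<in> Delta h b"
  shows "continuous_on (Delta h a \<times> U) (\<lambda>(\<rho>, u). jump_sum h \<nu> w a (\<rho> v* \<Lambda> u))"
proof -
  have "continuous_on (Delta h a \<times> U) (jump_sum h \<nu> w a \<circ> (\<lambda>(\<rho>, u). \<rho> v* \<Lambda> u))"
    using offdiag rowsum
    by (intro continuous_on_compose continuous_on_vector_matrix_mult[OF \<Lambda>]
        continuous_on_subset[OF continuous_on_jump_sum[OF w w_bdd \<nu>]])
      (auto intro: vector_matrix_mult_in_jump_vectors)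
  then show ?thesis
    by (simp add: comp_def case_prod_beta)
qed

lemma compact_Times_uniformly_continuous_in_first:
  fixes F :: "'a::metric_space \<Rightarrow> 'b::metric_space \<Rightarrow> 'c::metric_space"
  assumes "compact K" "compact U" "continuous_on (K \<times> U) (\<lambda>(x, u). F x u)" "0 < \<epsilon>"
  obtains \<delta> where "0 < \<delta>"
    "\<And>x x' u. x \<in> K \<Longrightarrow> x' \<in> K \<Longrightarrow> u \<in> U \<Longrightarrow> dist x' x < \<delta> \<Longrightarrow> dist (F x' u) (F x u) < \<epsilon>"
proof -
  have "uniformly_continuous_on (K \<times> U) (\<lambda>(x, u). F x u)"
    using assms compact_uniformly_continuous compact_Times by blast
  then obtain \<delta> where "0 < \<delta>"
    and "\<forall>p\<in>K \<times> U. \<forall>p'\<in>K \<times> U. dist p' p < \<delta> \<longrightarrow> dist ((\<lambda>(x, u). F x u) p') ((\<lambda>(x, u). F x u) p) < \<epsilon>"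
    using \<open>0 < \<epsilon>\<close> unfolding uniformly_continuous_on_def by metis
  then show thesis
    by (intro that[of \<delta>]) (auto simp: dist_Pair_Pair)
qed

theorem mainTheorem5:
  fixes h :: "'i::finite \<Rightarrow> 'o::finite"
    and U :: "'u::metric_space set"
    and \<Lambda> :: "'u \<Rightarrow> real^'i^'i"
    and \<nu> :: "'o \<Rightarrow> real^'i"
    and qa :: "'o \<Rightarrow> 'o \<Rightarrow> real"
    and w :: "real^'i \<Rightarrow> real"
  assumes h_surj: "surj h"
    and h_nonconst: "\<exists>x y. h x \<noteq> h y"
    and U_compact: "compact U"
    and offdiag: "\<forall>u\<in>U. \<forall>i j. i \<noteq> j \<longrightarrow> 0 \<le> \<Lambda> u $ i $ j"
    and rowsum: "\<forall>u\<in>U. \<forall>i. (\<Sum>j\<in>UNIV. \<Lambda> u $ i $ j) = 0"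
    and nu_in: "\<forall>b. \<nu> b \<in> Delta h b"
    and qa_prob: "\<forall>a. (\<forall>b. 0 \<le> qa a b) \<and> qa a a = 0 \<and> (\<Sum>b\<in>UNIV. qa a b) = 1"
    and lam_cont: "\<forall>i j. continuous_on U (\<lambda>u. \<Lambda> u $ i $ j)"
    and w_cont: "continuous_on (Delta_e h) w"
    and w_bdd: "bounded (w ` Delta_e h)"
  shows "\<forall>\<rho>\<in>Delta_e h. \<forall>\<epsilon>>0. \<exists>\<delta>>0. \<forall>\<rho>'\<in>Delta_e h. dist \<rho>' \<rho> < \<delta> \<longrightarrow>
           (\<exists>c<\<epsilon>. \<forall>u\<in>U.
              \<bar>rate h \<Lambda> \<rho>' u * integral\<^sup>L (Rker h \<Lambda> \<nu> qa \<rho>' u) w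
               - rate h \<Lambda> \<rho> u * integral\<^sup>L (Rker h \<Lambda> \<nu> qa \<rho> u) w\<bar> \<le> c)"
proof (intro ballI allI impI)
  fix \<rho> :: "real^'i" and \<epsilon> :: real
  assume "\<rho> \<in> Delta_e h" "0 < \<epsilon>"
  then obtain a where \<rho>: "\<rho> \<in> Delta h a" by (auto simp: Delta_e_def)
  obtain B where w_B: "\<And>x. x \<in> Delta_e h \<Longrightarrow> \<bar>w x\<bar> \<le> B"
    using w_bdd by (auto simp: bounded_real)
  have rate_integral: "rate h \<Lambda> \<rho>' u * integral\<^sup>L (Rker h \<Lambda> \<nu> qa \<rho>' u) w
      = jump_sum h \<nu> w a (\<rho>' v* \<Lambda> u)" if "\<rho>' \<in> Delta h a" "u \<in> U" for \<rho>' u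
    using rate_mult_integral_Rker[where \<Lambda> = \<Lambda> and u = u and qa = qa and a = a, OF that(1) _ nu_in]
      vector_matrix_mult_in_jump_vectors[OF that(1)] that(2) offdiag rowsum qa_prob w_cont
    by simp
  have "continuous_on (Delta h a \<times> U) (\<lambda>(x, u). jump_sum h \<nu> w a (x v* \<Lambda> u))"
    using offdiag rowsum lam_cont w_cont w_B nu_in by (rule continuous_on_jump_sum_generator)
  then obtain d where "0 < d" and d: "\<And>x x' u. x \<in> Delta h a \<Longrightarrow> x' \<in> Delta h a \<Longrightarrow> u \<in> U \<Longrightarrow>
      dist x' x < d \<Longrightarrow> dist (jump_sum h \<nu> w a (x' v* \<Lambda> u)) (jump_sum h \<nu> w a (x v* \<Lambda> u)) < \<epsilon> / 2"
    by (rule compact_Times_uniformly_continuous_in_first[OF compact_Delta U_compact _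
          half_gt_zero[OF \<open>0 < \<epsilon>\<close>]]) blast
  have "\<bar>rate h \<Lambda> \<rho>' u * integral\<^sup>L (Rker h \<Lambda> \<nu> qa \<rho>' u) w
      - rate h \<Lambda> \<rho> u * integral\<^sup>L (Rker h \<Lambda> \<nu> qa \<rho> u) w\<bar> \<le> \<epsilon> / 2"
    if "\<rho>' \<in> Delta_e h" and close: "dist \<rho>' \<rho> < min d (1 / real CARD('i))" and "u \<in> U" for \<rho>' u
  proof -
    have \<rho>': "\<rho>' \<in> Delta h a"
      using mem_Delta_if_dist_less[OF \<rho> \<open>\<rho>' \<in> Delta_e h\<close>] close by simp
    show ?thesis
      using d[OF \<rho> \<rho>' \<open>u \<in> U\<close>] close
      by (simp add: rate_integral \<rho> \<rho>' \<open>u \<in> U\<close> dist_real_def)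
  qed
  then show "\<exists>\<delta>>0. \<forall>\<rho>'\<in>Delta_e h. dist \<rho>' \<rho> < \<delta> \<longrightarrow> (\<exists>c<\<epsilon>. \<forall>u\<in>U.
      \<bar>rate h \<Lambda> \<rho>' u * integral\<^sup>L (Rker h \<Lambda> \<nu> qa \<rho>' u) w
       - rate h \<Lambda> \<rho> u * integral\<^sup>L (Rker h \<Lambda> \<nu> qa \<rho> u) w\<bar> \<le> c)"
    using \<open>0 < d\<close> \<open>0 < \<epsilon>\<close>
    by (intro exI[of _ "min d (1 / real CARD('i))"]) (auto intro!: exI[of _ "\<epsilon> / 2"])
qed

end
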